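(* Let $a,b$ be fixed nonzero complex constants, let $\{a_i\},\{b_i\},\{c_i\},\{d_i\}$ ($i\in\mathbb{Z}$) be complex sequences of nonzero numbers, and let $m,n\ge0$ be integers such that for $-n\le j\le m$ the quantities $(a_j+c_j)(a_j+\frac{b}{ac_j})$, $(a_j+d_j)(a_j+\frac{b}{ad_j})$, $(b_j-c_j)(1-\frac{b}{ab_jc_j})$, $(b_j-d_j)(1-\frac{b}{ab_jd_j})$ are nonzero. Then $$\sum_{k=-n}^{m}(a_k+b_k)\Big(a_k+\frac{b}{ab_k}\Big)(c_k-d_k)\Big(1-\frac{b}{ac_kd_k}\Big)\frac{\prod_{j=1}^{k-1}(a_j+c_j)(a_j+\frac{b}{ac_j})}{\prod_{j=1}^{k}(a_j+d_j)(a_j+\frac{b}{ad_j})}\frac{\prod_{j=1}^{k-1}(b_j-d_j)(1-\frac{b}{ab_jd_j})}{\prod_{j=1}^{k}(b_j-c_j)(1-\frac{b}{ab_jc_j})}$$ $$=\frac{\prod_{j=1}^{m}(a_j+c_j)(a_j+\frac{b}{ac_j})}{\prod_{j=1}^{m}(a_j+d_j)(a_j+\frac{b}{ad_j})}\frac{\prod_{j=1}^{m}(b_j-d_j)(1-\frac{b}{ab_jd_j})}{\prod_{j=1}^{m}(b_j-c_j)(1-\frac{b}{ab_jc_j})}-\frac{\prod_{j=-n}^{0}(a_j+d_j)(a_j+\frac{b}{ad_j})}{\prod_{j=-n}^{0}(a_j+c_j)(a_j+\frac{b}{ac_j})}\frac{\prod_{j=-n}^{0}(b_j-c_j)(1-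\frac{b}{ab_jc_j})}{\prod_{j=-n}^{0}(b_j-d_j)(1-\frac{b}{ab_jd_j})}.$$
   Context: Products over integer ranges follow the convention: $\prod_{j=k}^{m}A_j=A_k\cdots A_m$ if $m\ge k$; $=1$ if $m=k-1$; $=(A_{m+1}\cdots A_{k-1})^{-1}$ if $m\le k-2$. The constants $a,b$ are distinct objects from the sequences $a_k,b_k$. *)

theory Defs
  imports Complex_Main
begin

definition gprod :: "(int \<Rightarrow> complex) \<Rightarrow> int \<Rightarrow> int \<Rightarrow> complex" where
  "gprod A k m =
     (if m \<ge> k then (\<Prod>j\<in>{k..m}. A j)
      else if m = k - 1 then 1
      else inverse (\<Prod>j\<in>{m+1..k-1}. A j))"

end

theory Submission
  imports Defs
begin

text \<open>With \<open>F k\<close> the double ratio of products over \<open>1..k\<close> appearing on the right, the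
  rational identity \<open>cross_difference_factorization\<close> shows that the \<open>k\<close>-th summand is
  \<open>F k - F (k - 1)\<close>, so the sum telescopes to \<open>F m - F (-n - 1)\<close>. By the convention for
  products over reversed ranges, \<open>F (-n - 1)\<close> is the reciprocal double ratio over \<open>-n..0\<close>.\<close>

lemma cross_difference_factorization:
  fixes q A B C D :: "'a :: field"
  assumes "B \<noteq> 0" "C \<noteq> 0" "D \<noteq> 0"
  shows "(A + C) * (A + q / C) * ((B - D) * (1 - q / (B * D)))
           - (A + D) * (A + q / D) * ((B - C) * (1 - q / (B * C)))
         = (A + B) * (A + q / B) * (C - D) * (1 - q / (C * D))"
  using assms by (simp add: field_simps)

lemma gprod_step:
  assumes "k < c \<Longrightarrow> A k \<noteq> 0"
  shows "gprod A c k = gprod A c (k - 1) * A k"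
proof (cases "c \<le> k")
  case True
  show ?thesis
  proof (cases "k = c")
    case False
    with True have "{c..k} = insert k {c..k - 1}" by auto
    with True False show ?thesis by (simp add: gprod_def mult.commute)
  qed (simp add: gprod_def)
next
  case False
  with assms have "A k \<noteq> 0" by simp
  show ?thesis
  proof (cases "k = c - 1")
    case False
    with \<open>\<not> c \<le> k\<close> have "{k..c - 1} = insert k {k + 1..c - 1}" by auto
    with \<open>\<not> c \<le> k\<close> False \<open>A k \<noteq> 0\<close> show ?thesis by (simp add: gprod_def)
  qed (use \<open>A k \<noteq> 0\<close> in \<open>simp add: gprod_def\<close>)
qed

lemma gprod_nonzero:
  assumes "\<And>j. c \<le> j \<Longrightarrow> j \<le> k \<Longrightarrow> A j \<noteq> 0"
    and "\<And>j. k < j \<Longrightarrow> j < c \<Longrightarrow> A j \<noteq> 0"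
  shows "gprod A c k \<noteq> 0"
  using assms by (auto simp add: gprod_def prod_zero_iff)

lemma gprod_reverse:
  assumes "k \<le> c"
  shows "gprod A c (k - 1) = inverse (gprod A k (c - 1))"
  using assms by (simp add: gprod_def)

lemma sum_telescope_int:
  fixes F :: "int \<Rightarrow> 'a :: ab_group_add"
  assumes "l - 1 \<le> m"
  shows "(\<Sum>k\<in>{l..m}. F k - F (k - 1)) = F m - F (l - 1)"
  using assms
proof (induction m rule: int_ge_induct)
  case (step i)
  then have "{l..i + 1} = insert (i + 1) {l..i}" by auto
  with step show ?case by simp
qed simp

lemma sum_gprod_ratio_telescope:
  fixes P Q R S :: "int \<Rightarrow> complex"
  assumes "l \<le> c" "c - 1 \<le> m"
    and nonzero: "\<And>j. l \<le> j \<Longrightarrow> j \<le> m \<Longrightarrow> P j \<noteq> 0 \<and> Q j \<noteq> 0 \<and> R j \<noteq> 0 \<and> S j \<noteq> 0"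
  defines "F \<equiv> \<lambda>k. (gprod P c k / gprod Q c k) * (gprod R c k / gprod S c k)"
  shows "(\<Sum>k\<in>{l..m}. (P k * R k - Q k * S k)
             * (gprod P c (k - 1) / gprod Q c k) * (gprod R c (k - 1) / gprod S c k))
         = F m - F (l - 1)"
proof -
  have gprod_nonzero_before: "gprod X c (k - 1) \<noteq> 0"
    if "\<And>j. l \<le> j \<Longrightarrow> j \<le> m \<Longrightarrow> X j \<noteq> 0" "k \<in> {l..m}" for X k
    by (rule gprod_nonzero) (use that assms(1,2) in auto)
  have "(P k * R k - Q k * S k)
          * (gprod P c (k - 1) / gprod Q c k) * (gprod R c (k - 1) / gprod S c k)
        = F k - F (k - 1)" if k: "k \<in> {l..m}" for k
  proof -
    have "X = P \<or> X = Q \<or> X = R \<or> X = S \<Longrightarrow> gprod X c k = gprod X c (k - 1) * X k" for X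
      by (rule gprod_step) (use nonzero k assms(1) in auto)
    moreover have "gprod Q c (k - 1) \<noteq> 0" "gprod S c (k - 1) \<noteq> 0"
      using gprod_nonzero_before[of Q k] gprod_nonzero_before[of S k] nonzero k by auto
    moreover have "Q k \<noteq> 0" "S k \<noteq> 0" using nonzero k by auto
    ultimately show ?thesis by (simp add: F_def field_simps)
  qed
  then have "(\<Sum>k\<in>{l..m}. (P k * R k - Q k * S k)
               * (gprod P c (k - 1) / gprod Q c k) * (gprod R c (k - 1) / gprod S c k))
             = (\<Sum>k\<in>{l..m}. F k - F (k - 1))"
    by (rule sum.cong[OF refl])
  also have "\<dots> = F m - F (l - 1)"
    by (rule sum_telescope_int) (use assms(1,2) in simp)
  finally show ?thesis .
qed

theorem corollary3p6:
  fixes a b :: complex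
    and as bs cs ds :: "int \<Rightarrow> complex"
    and m n :: int
  assumes "a \<noteq> 0" and "b \<noteq> 0"
    and "\<And>i. as i \<noteq> 0" and "\<And>i. bs i \<noteq> 0"
    and "\<And>i. cs i \<noteq> 0" and "\<And>i. ds i \<noteq> 0"
    and "m \<ge> 0" and "n \<ge> 0"
    and "\<And>j. -n \<le> j \<Longrightarrow> j \<le> m \<Longrightarrow> (as j + cs j) * (as j + b / (a * cs j)) \<noteq> 0"
    and "\<And>j. -n \<le> j \<Longrightarrow> j \<le> m \<Longrightarrow> (as j + ds j) * (as j + b / (a * ds j)) \<noteq> 0"
    and "\<And>j. -n \<le> j \<Longrightarrow> j \<le> m \<Longrightarrow> (bs j - cs j) * (1 - b / (a * bs j * cs j)) \<noteq> 0"
    and "\<And>j. -n \<le> j \<Longrightarrow> j \<le> m \<Longrightarrow> (bs j - ds j) * (1 - b / (a * bs j * ds j)) \<noteq> 0"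
  shows
   "(let AC = (\<lambda>j. (as j + cs j) * (as j + b / (a * cs j)));
         AD = (\<lambda>j. (as j + ds j) * (as j + b / (a * ds j)));
         BC = (\<lambda>j. (bs j - cs j) * (1 - b / (a * bs j * cs j)));
         BD = (\<lambda>j. (bs j - ds j) * (1 - b / (a * bs j * ds j)))
     in (\<Sum>k\<in>{-n..m}. (as k + bs k) * (as k + b / (a * bs k)) * (cs k - ds k)
              * (1 - b / (a * cs k * ds k))
              * (gprod AC 1 (k - 1) / gprod AD 1 k)
              * (gprod BD 1 (k - 1) / gprod BC 1 k))
        = (gprod AC 1 m / gprod AD 1 m) * (gprod BD 1 m / gprod BC 1 m)
          - (gprod AD (-n) 0 / gprod AC (-n) 0) * (gprod BC (-n) 0 / gprod BD (-n) 0))"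
proof -
  define AC where "AC = (\<lambda>j. (as j + cs j) * (as j + b / (a * cs j)))"
  define AD where "AD = (\<lambda>j. (as j + ds j) * (as j + b / (a * ds j)))"
  define BC where "BC = (\<lambda>j. (bs j - cs j) * (1 - b / (a * bs j * cs j)))"
  define BD where "BD = (\<lambda>j. (bs j - ds j) * (1 - b / (a * bs j * ds j)))"
  have summand: "(as k + bs k) * (as k + b / (a * bs k)) * (cs k - ds k) * (1 - b / (a * cs k * ds k))
                 = AC k * BD k - AD k * BC k" for k
    using cross_difference_factorization[of "bs k" "cs k" "ds k" "as k" "b / a"] assms(4-6)
    by (simp add: AC_def AD_def BC_def BD_def mult.assoc)
  have "(\<Sum>k\<in>{-n..m}. (AC k * BD k - AD k * BC k)
            * (gprod AC 1 (k - 1) / gprod AD 1 k) * (gprod BD 1 (k - 1) / gprod BC 1 k))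
        = (gprod AC 1 m / gprod AD 1 m) * (gprod BD 1 m / gprod BC 1 m)
          - (gprod AC 1 (-n - 1) / gprod AD 1 (-n - 1)) * (gprod BD 1 (-n - 1) / gprod BC 1 (-n - 1))"
    by (rule sum_gprod_ratio_telescope) (use assms(7-12) in \<open>auto simp: AC_def AD_def BC_def BD_def\<close>)
  moreover have "gprod X 1 (-n - 1) = inverse (gprod X (-n) 0)" for X
    using gprod_reverse[of "-n" 1 X] assms(8) by simp
  ultimately show ?thesis
    unfolding Let_def AC_def [symmetric] AD_def [symmetric] BC_def [symmetric] BD_def [symmetric]
      summand
    by (simp add: divide_inverse mult_ac)
qed

end
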